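(* If $b<0$, then $\ln\rho_t\sim bt$ as $t\to\infty$, where $\rho_t=v_{-t}(\lambda_0)$.
   Context: Let $\sigma\ge 0$, $b\in\mathbb R$, and $\pi$ a $\sigma$-finite measure on $(0,\infty)$ with $\int_0^\infty (z\wedge z^2)\pi(\mathrm{d}z)<\infty$; $\Psi(q)=bq+\frac12\sigma^2q^2+\int_0^\infty(e^{-qu}-1+qu)\pi(\mathrm{d}u)$. For $\lambda\ge 0$, $t\mapsto v_t(\lambda)$ solves $\frac{\partial}{\partial t}v_t(\lambda)=-\Psi(v_t(\lambda))$, $v_0(\lambda)=\lambda$; $v_{-t}$ denotes the inverse of the strictly increasing map $\lambda\mapsto v_t(\lambda)$. Let $\rho=\inf\{z>0:\Psi(z)\ge0\}$ ($\inf\emptyset=\infty$), and fix $\lambda_0\in(0,\rho)$. *)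

theory Defs
  imports "HOL-Analysis.Analysis" "HOL-Probability.Probability" "HOL-Library.Landau_Symbols"
begin

definition Psi :: "real \<Rightarrow> real \<Rightarrow> real measure \<Rightarrow> real \<Rightarrow> real" where
  "Psi b \<sigma> \<pi> q = b * q + (1/2) * \<sigma>\<^sup>2 * q\<^sup>2 + (\<integral>u. (exp (- q * u) - 1 + q * u) \<partial>\<pi>)"

definition rho_crit :: "real \<Rightarrow> real \<Rightarrow> real measure \<Rightarrow> ereal" where
  "rho_crit b \<sigma> \<pi> =
     (if {z. z > 0 \<and> Psi b \<sigma> \<pi> z \<ge> 0} = {} then \<infinity>
      else ereal (Inf {z. z > 0 \<and> Psi b \<sigma> \<pi> z \<ge> 0}))"

text \<open>v_{-t}: inverse of the strictly increasing map lambda \<mapsto> v_t(lambda) on [0,\<infinity>).\<close>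
definition v_inv :: "(real \<Rightarrow> real \<Rightarrow> real) \<Rightarrow> real \<Rightarrow> real \<Rightarrow> real" where
  "v_inv v t \<mu> = (THE l. l \<ge> 0 \<and> v t l = \<mu>)"

end

theory Submission
  imports Defs
begin

(* Let w(s) = v_s(rho_t) be the trajectory that climbs from rho_t = v_{-t}(lambda_0) to lambda_0 in
   time t; along it (ln w)' = -Psi(w)/w.  Since Psi(q) >= b q, this rate is at most -b, whence
   ln rho_t >= ln lambda_0 + b t.  Conversely, Psi(q)/q is nondecreasing (Psi is convex with
   Psi(0) = 0) and tends to b as q -> 0+.  Fix a small level delta with Psi(delta)/delta < b + eps:
   while w stays below delta, ln w grows at rate at least -b - eps, and the time spent between delta
   and lambda_0 is bounded independently of t, so ln rho_t <= K + (b + eps) t.  Existence and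
   uniqueness of rho_t come from the intermediate value theorem and a two-sided Gronwall estimate,
   Psi being Lipschitz on bounded intervals. *)

section \<open>Real analysis\<close>

lemma mvt_increment_ge:
  fixes f f' :: "real \<Rightarrow> real"
  assumes "a \<le> b"
    and deriv: "\<And>x. a \<le> x \<Longrightarrow> x \<le> b \<Longrightarrow> (f has_real_derivative f' x) (at x within {a..b})"
    and bound: "\<And>x. a < x \<Longrightarrow> x < b \<Longrightarrow> k \<le> f' x"
  shows "k * (b - a) \<le> f b - f a"
proof (cases "a = b")
  case False
  then have "a < b" using \<open>a \<le> b\<close> by simp
  then obtain x where "a < x" "x < b" "f b - f a = f' x * (b - a)"
    using mvt_simple[of a b f "\<lambda>x. (*) (f' x)"] deriv by (auto simp: has_field_derivative_def)
  then show ?thesis using bound[of x] \<open>a \<le> b\<close> by (simp add: mult_right_mono)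
qed simp

lemma mvt_increment_le:
  fixes f f' :: "real \<Rightarrow> real"
  assumes "a \<le> b"
    and deriv: "\<And>x. a \<le> x \<Longrightarrow> x \<le> b \<Longrightarrow> (f has_real_derivative f' x) (at x within {a..b})"
    and bound: "\<And>x. a < x \<Longrightarrow> x < b \<Longrightarrow> f' x \<le> k"
  shows "f b - f a \<le> k * (b - a)"
proof -
  have "- k * (b - a) \<le> - f b - - f a"
    by (rule mvt_increment_ge[where f = "\<lambda>x. - f x" and f' = "\<lambda>x. - f' x"])
      (use assms in \<open>auto intro: DERIV_minus\<close>)
  then show ?thesis by simp
qed

lemma gronwall_two_sided:
  fixes D D' :: "real \<Rightarrow> real"
  assumes "0 \<le> t"
    and deriv: "\<And>s. 0 \<le> s \<Longrightarrow> s \<le> t \<Longrightarrow> (D has_real_derivative D' s) (at s within {0..t})"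
    and bound: "\<And>s. 0 \<le> s \<Longrightarrow> s \<le> t \<Longrightarrow> \<bar>D' s\<bar> \<le> k * D s"
  shows "D t \<le> exp (k * t) * D 0" and "D 0 \<le> exp (k * t) * D t"
proof -
  have "D t * exp (- k * t) - D 0 * exp (- k * 0) \<le> 0 * (t - 0)"
  proof (rule mvt_increment_le[where f = "\<lambda>s. D s * exp (- k * s)"
        and f' = "\<lambda>s. D' s * exp (- k * s) - k * D s * exp (- k * s)", OF \<open>0 \<le> t\<close>])
    fix s assume "0 \<le> s" "s \<le> t"
    then show "((\<lambda>s. D s * exp (- k * s)) has_real_derivative
        D' s * exp (- k * s) - k * D s * exp (- k * s)) (at s within {0..t})"
      by (auto intro!: derivative_eq_intros deriv)
  next
    fix s assume "0 < s" "s < t"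
    show "D' s * exp (- k * s) - k * D s * exp (- k * s) \<le> 0"
      using bound[of s] \<open>0 < s\<close> \<open>s < t\<close> by (simp add: algebra_simps)
  qed
  then show "D t \<le> exp (k * t) * D 0"
    by (simp add: exp_minus field_simps)
  have "0 * (t - 0) \<le> D t * exp (k * t) - D 0 * exp (k * 0)"
  proof (rule mvt_increment_ge[where f = "\<lambda>s. D s * exp (k * s)"
        and f' = "\<lambda>s. D' s * exp (k * s) + k * D s * exp (k * s)", OF \<open>0 \<le> t\<close>])
    fix s assume "0 \<le> s" "s \<le> t"
    then show "((\<lambda>s. D s * exp (k * s)) has_real_derivative
        D' s * exp (k * s) + k * D s * exp (k * s)) (at s within {0..t})"
      by (auto intro!: derivative_eq_intros deriv)
  next
    fix s assume "0 < s" "s < t"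
    have "0 \<le> (D' s + k * D s) * exp (k * s)"
      using bound[of s] \<open>0 < s\<close> \<open>s < t\<close> by (intro mult_nonneg_nonneg) (auto simp: abs_le_iff)
    then show "0 \<le> D' s * exp (k * s) + k * D s * exp (k * s)"
      by (simp add: algebra_simps)
  qed
  then show "D 0 \<le> exp (k * t) * D t" by (simp add: mult.commute)
qed

lemma last_time_in_closed:
  fixes f :: "real \<Rightarrow> 'a::topological_space"
  assumes cont: "continuous_on {a..b} f" and "closed F" "a \<le> b" "f a \<in> F" "f b \<notin> F"
  obtains m where "a \<le> m" "m < b" "f m \<in> F" "\<And>x. m < x \<Longrightarrow> x \<le> b \<Longrightarrow> f x \<notin> F"
proof -
  define S where "S = {a..b} \<inter> f -` F"
  have "closed S"
    unfolding S_def by (rule continuous_closed_preimage[OF cont]) (use \<open>closed F\<close> in auto)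
  moreover have "a \<in> S" "bdd_above S"
    using assms by (auto simp: S_def intro: bdd_aboveI[of _ b])
  ultimately have "Sup S \<in> S" using closed_contains_Sup by blast
  moreover have "f x \<notin> F" if "Sup S < x" "x \<le> b" for x
  proof
    assume "f x \<in> F"
    with that \<open>Sup S \<in> S\<close> have "x \<in> S" by (auto simp: S_def)
    then show False using cSup_upper[OF _ \<open>bdd_above S\<close>] that by fastforce
  qed
  moreover have "Sup S < b"
    using \<open>Sup S \<in> S\<close> \<open>f b \<notin> F\<close> by (auto simp: S_def order.order_iff_strict)
  ultimately show ?thesis using that by (auto simp: S_def)
qed

lemma continuous_on_Icc_at_right:
  fixes f :: "real \<Rightarrow> 'a::topological_space"
  assumes "continuous_on {a..b} f" "a < b"
  shows "(f \<longlongrightarrow> f a) (at_right a)"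
proof -
  have "(f \<longlongrightarrow> f a) (at a within {a..b})"
    using assms by (auto simp: continuous_on_def)
  moreover have "at a within {a..b} = at_right a"
    by (rule at_within_nhd[of _ "{..<b}"]) (use assms in auto)
  ultimately show ?thesis by simp
qed

lemma asymp_equiv_linear_sandwich:
  fixes g :: "real \<Rightarrow> real"
  assumes "b \<noteq> 0"
    and lower: "\<And>t. 0 \<le> t \<Longrightarrow> A + b * t \<le> g t"
    and upper: "\<And>\<epsilon>. 0 < \<epsilon> \<Longrightarrow> \<exists>K. \<forall>t\<ge>0. g t \<le> K + (b + \<epsilon>) * t"
  shows "g \<sim>[at_top] (\<lambda>t. b * t)"
proof (rule smallo_imp_asymp_equiv, rule landau_o.smallI)
  fix c :: real assume "0 < c"
  define \<epsilon> where "\<epsilon> = c * \<bar>b\<bar> / 2"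
  have "0 < \<epsilon>" using \<open>0 < c\<close> \<open>b \<noteq> 0\<close> by (simp add: \<epsilon>_def)
  then obtain K where K: "\<And>t. 0 \<le> t \<Longrightarrow> g t \<le> K + (b + \<epsilon>) * t" using upper by blast
  show "\<forall>\<^sub>F t in at_top. norm (g t - b * t) \<le> c * norm (b * t)"
    using eventually_ge_at_top[of "max 0 (max (\<bar>A\<bar> / (2 * \<epsilon>)) (K / \<epsilon>))"]
  proof eventually_elim
    case (elim t)
    then have "0 \<le> t" "\<bar>A\<bar> \<le> 2 * \<epsilon> * t" "K \<le> \<epsilon> * t"
      using \<open>0 < \<epsilon>\<close> by (auto simp: field_simps)
    then have "\<bar>g t - b * t\<bar> \<le> 2 * \<epsilon> * t"
      using lower[of t] K[of t] by (auto simp: abs_le_iff algebra_simps)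
    then show ?case using \<open>0 \<le> t\<close> by (simp add: \<epsilon>_def abs_mult)
  qed
qed

section \<open>Solutions of w' = -P(w)\<close>

definition ode_solution :: "(real \<Rightarrow> real) \<Rightarrow> (real \<Rightarrow> real) \<Rightarrow> bool" where
  "ode_solution P w \<longleftrightarrow> (\<forall>s\<ge>0. (w has_real_derivative - P (w s)) (at s within {0..}))"

lemma ode_solution_has_derivative:
  assumes "ode_solution P w" "0 \<le> a" "a \<le> x" "x \<le> b"
  shows "(w has_real_derivative - P (w x)) (at x within {a..b})"
  by (rule DERIV_subset[of _ _ _ "{0..}"]) (use assms in \<open>auto simp: ode_solution_def\<close>)

lemma ode_solution_continuous_on:
  assumes "ode_solution P w" "0 \<le> a"
  shows "continuous_on {a..b} w"
  by (rule DERIV_continuous_on[of _ _ "\<lambda>s. - P (w s)"])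
    (use assms ode_solution_has_derivative in auto)

lemma ode_solution_ln_has_derivative:
  assumes "ode_solution P w" "0 \<le> a" "a \<le> x" "x \<le> b" "0 < w x"
  shows "((\<lambda>s. ln (w s)) has_real_derivative - P (w x) / w x) (at x within {a..b})"
  using DERIV_chain2[OF DERIV_ln_divide[OF assms(5)] ode_solution_has_derivative[OF assms(1-4)]]
  by simp

lemma ode_solution_ln_increment_le:
  assumes sol: "ode_solution P w" and "0 \<le> a" "a \<le> b"
    and pos: "\<And>s. a \<le> s \<Longrightarrow> s \<le> b \<Longrightarrow> 0 < w s"
    and bound: "\<And>s. a < s \<Longrightarrow> s < b \<Longrightarrow> - P (w s) / w s \<le> k"
  shows "ln (w b) - ln (w a) \<le> k * (b - a)"
  by (rule mvt_increment_le[where f' = "\<lambda>s. - P (w s) / w s"])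
    (use assms ode_solution_ln_has_derivative[OF sol] in auto)

lemma ode_solution_ln_increment_ge:
  assumes sol: "ode_solution P w" and "0 \<le> a" "a \<le> b"
    and pos: "\<And>s. a \<le> s \<Longrightarrow> s \<le> b \<Longrightarrow> 0 < w s"
    and bound: "\<And>s. a < s \<Longrightarrow> s < b \<Longrightarrow> k \<le> - P (w s) / w s"
  shows "k * (b - a) \<le> ln (w b) - ln (w a)"
  by (rule mvt_increment_ge[where f' = "\<lambda>s. - P (w s) / w s"])
    (use assms ode_solution_ln_has_derivative[OF sol] in auto)

lemma ode_solution_stays_above:
  assumes sol: "ode_solution P w" and "0 \<le> s0" "s0 \<le> s1" "0 < c" "c \<le> w s0"
    and neg: "\<And>z. 0 < z \<Longrightarrow> z < c \<Longrightarrow> P z < 0"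
  shows "c \<le> w s1"
proof (rule ccontr)
  assume "\<not> c \<le> w s1"
  have cont: "continuous_on {s0..s1} w"
    using ode_solution_continuous_on[OF sol \<open>0 \<le> s0\<close>] .
  obtain m where m: "s0 \<le> m" "m < s1" "c \<le> w m"
    and below: "\<And>x. m < x \<Longrightarrow> x \<le> s1 \<Longrightarrow> w x < c"
    by (rule last_time_in_closed[OF cont closed_atLeast[of c] \<open>s0 \<le> s1\<close>])
      (use assms \<open>\<not> c \<le> w s1\<close> in \<open>auto simp: not_le\<close>)
  have "(w \<longlongrightarrow> w m) (at_right m)"
    using continuous_on_subset[OF cont, of "{m..s1}"] m by (intro continuous_on_Icc_at_right) auto
  then have "\<forall>\<^sub>F x in at_right m. 0 < w x"
    by (rule order_tendstoD(1)) (use m \<open>0 < c\<close> in auto)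
  then obtain e where "m < e" and pos: "\<And>x. m < x \<Longrightarrow> x < e \<Longrightarrow> 0 < w x"
    by (auto simp: eventually_at_right_field)
  define s where "s = min e s1"
  have "0 * (s - m) \<le> w s - w m"
  proof (rule mvt_increment_ge[where f' = "\<lambda>x. - P (w x)"])
    show "m \<le> s" using \<open>m < e\<close> m by (simp add: s_def)
    show "(w has_real_derivative - P (w x)) (at x within {m..s})" if "m \<le> x" "x \<le> s" for x
      using that m \<open>0 \<le> s0\<close> by (intro ode_solution_has_derivative[OF sol]) auto
    show "0 \<le> - P (w x)" if "m < x" "x < s" for x
      using neg[of "w x"] pos[of x] below[of x] that by (auto simp: s_def)
  qed
  moreover have "w s < c" using below \<open>m < e\<close> m by (simp add: s_def)
  ultimately show False using m by simp
qed

lemma ode_solution_positive_backward: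
  assumes sol: "ode_solution P w" and lb: "\<And>z. 0 < z \<Longrightarrow> B * z \<le> P z"
    and "0 \<le> s" "s \<le> t" "0 < w t"
  shows "0 < w s"
proof (rule ccontr)
  assume "\<not> 0 < w s"
  have cont: "continuous_on {s..t} w"
    using ode_solution_continuous_on[OF sol \<open>0 \<le> s\<close>] .
  obtain m where m: "s \<le> m" "m < t" "w m \<le> 0"
    and pos: "\<And>x. m < x \<Longrightarrow> x \<le> t \<Longrightarrow> 0 < w x"
    by (rule last_time_in_closed[OF cont closed_atMost[of 0] \<open>s \<le> t\<close>])
      (use assms \<open>\<not> 0 < w s\<close> in \<open>auto simp: not_le\<close>)
  have "w t * exp (- \<bar>B\<bar> * t) \<le> w x" if "m < x" "x \<le> t" for x
  proof -
    have "ln (w t) - ln (w x) \<le> - B * (t - x)"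
    proof (rule ode_solution_ln_increment_le[OF sol])
      fix y assume "x < y" "y < t"
      then show "- P (w y) / w y \<le> - B" using lb[of "w y"] pos[of y] that by (simp add: divide_simps)
    qed (use that m \<open>0 \<le> s\<close> pos in auto)
    also have "\<dots> \<le> \<bar>B\<bar> * (t - x)" using that by (intro mult_right_mono) auto
    also have "\<dots> \<le> \<bar>B\<bar> * t" using that m \<open>0 \<le> s\<close> by (intro mult_left_mono) auto
    finally have "ln (w t) - \<bar>B\<bar> * t \<le> ln (w x)" by simp
    then have "exp (ln (w t) - \<bar>B\<bar> * t) \<le> exp (ln (w x))" by simp
    then have "exp (ln (w t) - \<bar>B\<bar> * t) \<le> w x" using pos[OF that] by simp
    then show ?thesis using \<open>0 < w t\<close> by (simp add: exp_diff exp_minus field_simps)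
  qed
  then have "w t * exp (- \<bar>B\<bar> * t) \<le> w m"
    using continuous_on_subset[OF cont, of "{m..t}"] m
    by (intro tendsto_lowerbound[OF continuous_on_Icc_at_right])
      (auto simp: eventually_at_right_field intro!: exI[of _ t])
  moreover have "0 < w t * exp (- \<bar>B\<bar> * t)" using \<open>0 < w t\<close> by simp
  ultimately show False using m by simp
qed

lemma ode_solutions_gronwall:
  assumes sol1: "ode_solution P w1" and sol2: "ode_solution P w2" and "0 \<le> t"
    and lip: "\<And>s. 0 \<le> s \<Longrightarrow> s \<le> t \<Longrightarrow> \<bar>P (w1 s) - P (w2 s)\<bar> \<le> L * \<bar>w1 s - w2 s\<bar>"
  shows "\<bar>w1 t - w2 t\<bar> \<le> exp (L * t) * \<bar>w1 0 - w2 0\<bar>"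
    and "\<bar>w1 0 - w2 0\<bar> \<le> exp (L * t) * \<bar>w1 t - w2 t\<bar>"
proof -
  define D where "D s = (w1 s - w2 s)\<^sup>2" for s
  define D' where "D' s = 2 * (w1 s - w2 s) * (P (w2 s) - P (w1 s))" for s
  have deriv: "(D has_real_derivative D' s) (at s within {0..t})" if "0 \<le> s" "s \<le> t" for s
    unfolding D_def[abs_def] D'_def using that
    by (auto intro!: derivative_eq_intros ode_solution_has_derivative[OF sol1]
        ode_solution_has_derivative[OF sol2] simp: algebra_simps)
  have bound: "\<bar>D' s\<bar> \<le> (2 * L) * D s" if "0 \<le> s" "s \<le> t" for s
  proof -
    have "\<bar>D' s\<bar> = 2 * \<bar>w1 s - w2 s\<bar> * \<bar>P (w1 s) - P (w2 s)\<bar>"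
      unfolding D'_def abs_mult by (simp add: abs_minus_commute)
    also have "\<dots> \<le> 2 * \<bar>w1 s - w2 s\<bar> * (L * \<bar>w1 s - w2 s\<bar>)"
      by (intro mult_left_mono lip that) simp
    finally show ?thesis by (simp add: D_def power2_eq_square abs_mult_self_eq algebra_simps)
  qed
  have exp_sq: "exp (2 * L * t) * x\<^sup>2 = (exp (L * t) * \<bar>x\<bar>)\<^sup>2" for x
    unfolding power_mult_distrib power2_abs by (simp add: power2_eq_square flip: exp_add)
  show "\<bar>w1 t - w2 t\<bar> \<le> exp (L * t) * \<bar>w1 0 - w2 0\<bar>"
    using gronwall_two_sided(1)[OF \<open>0 \<le> t\<close> deriv bound]
    by (simp add: D_def exp_sq abs_le_square_iff[symmetric])
  show "\<bar>w1 0 - w2 0\<bar> \<le> exp (L * t) * \<bar>w1 t - w2 t\<bar>"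
    using gronwall_two_sided(2)[OF \<open>0 \<le> t\<close> deriv bound]
    by (simp add: D_def exp_sq abs_le_square_iff[symmetric])
qed

section \<open>The branching mechanism\<close>

definition psi_jump :: "real \<Rightarrow> real \<Rightarrow> real" where
  "psi_jump q u = exp (- q * u) - 1 + q * u"

lemma psi_jump_zero [simp]: "psi_jump 0 u = 0"
  by (simp add: psi_jump_def)

lemma psi_jump_nonneg: "0 \<le> psi_jump q u"
  unfolding psi_jump_def using exp_ge_add_one_self[of "- q * u"] by simp

lemma psi_jump_has_derivative:
  "((\<lambda>q. psi_jump q u) has_real_derivative u * (1 - exp (- q * u))) (at q within S)"
  unfolding psi_jump_def[abs_def] by (auto intro!: derivative_eq_intros simp: algebra_simps)

lemma psi_jump_derivative_bounds:
  fixes q u :: real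
  assumes "0 \<le> q" "0 \<le> u"
  shows "0 \<le> u * (1 - exp (- q * u))" and "u * (1 - exp (- q * u)) \<le> min u (q * u\<^sup>2)"
proof -
  have "0 \<le> 1 - exp (- q * u)" "1 - exp (- q * u) \<le> 1" "1 - exp (- q * u) \<le> q * u"
    using assms exp_ge_add_one_self[of "- q * u"] by auto
  then have "u * (1 - exp (- q * u)) \<le> u * 1" "u * (1 - exp (- q * u)) \<le> u * (q * u)"
    and "0 \<le> u * (1 - exp (- q * u))"
    using assms by (simp_all only: mult_left_mono mult_nonneg_nonneg)
  then show "0 \<le> u * (1 - exp (- q * u))" "u * (1 - exp (- q * u)) \<le> min u (q * u\<^sup>2)"
    by (simp_all add: power2_eq_square algebra_simps)
qed

lemma psi_jump_mono:
  assumes "0 \<le> y" "y \<le> x" "0 \<le> u"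
  shows "psi_jump y u \<le> psi_jump x u"
  using mvt_increment_ge[OF \<open>y \<le> x\<close> psi_jump_has_derivative, of 0] psi_jump_derivative_bounds(1) assms
  by simp

lemma psi_jump_increment_le:
  assumes "0 \<le> y" "y \<le> x" "0 \<le> u"
  shows "psi_jump x u - psi_jump y u \<le> (x - y) * min u (x * u\<^sup>2)"
proof -
  have "psi_jump x u - psi_jump y u \<le> min u (x * u\<^sup>2) * (x - y)"
  proof (rule mvt_increment_le[OF \<open>y \<le> x\<close> psi_jump_has_derivative])
    fix q assume "y < q" "q < x"
    then have "min u (q * u\<^sup>2) \<le> min u (x * u\<^sup>2)" by (intro min.mono mult_right_mono) auto
    then show "u * (1 - exp (- q * u)) \<le> min u (x * u\<^sup>2)"
      using psi_jump_derivative_bounds(2)[of q u] \<open>y < q\<close> assms by linarith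
  qed
  then show ?thesis by (simp add: mult.commute)
qed

lemma psi_jump_slope_le:
  assumes "0 < q" "0 \<le> u"
  shows "psi_jump q u / q \<le> min u (q * u\<^sup>2)"
proof -
  have "psi_jump q u \<le> q * min u (q * u\<^sup>2)" using psi_jump_increment_le[of 0 q u] assms by simp
  then show ?thesis using assms by (simp only: pos_divide_le_eq mult.commute)
qed

lemma min_mult_square_le:
  fixes u M :: real
  assumes "0 \<le> u"
  shows "min u (M * u\<^sup>2) \<le> max 1 M * min u (u\<^sup>2)"
proof (cases "u \<le> u\<^sup>2")
  case True
  have "min u (M * u\<^sup>2) \<le> 1 * u" by (rule order.trans[OF min.cobounded1]) simp
  also have "\<dots> \<le> max 1 M * u" using assms by (intro mult_right_mono) auto
  finally show ?thesis using True by (simp add: min_def)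
next
  case False
  then have "min u (M * u\<^sup>2) \<le> M * u\<^sup>2" "M * u\<^sup>2 \<le> max 1 M * u\<^sup>2"
    by (auto intro: mult_right_mono)
  then show ?thesis using False by (simp add: min_def)
qed

lemma psi_jump_scale_le:
  assumes "0 \<le> \<theta>" "\<theta> \<le> 1"
  shows "psi_jump (\<theta> * x) u \<le> \<theta> * psi_jump x u"
proof -
  have "exp ((1 - \<theta>) *\<^sub>R 0 + \<theta> *\<^sub>R (- x * u)) \<le> (1 - \<theta>) * exp 0 + \<theta> * exp (- x * u)"
    by (rule convex_onD[OF exp_convex]) (use assms in auto)
  then show ?thesis unfolding psi_jump_def by (simp add: algebra_simps)
qed

locale levy_measure =
  fixes \<pi> :: "real measure"
  assumes sets_eq: "sets \<pi> = sets borel"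
    and nonpos_null: "emeasure \<pi> {..0} = 0"
    and moment: "(\<integral>\<^sup>+ z. ennreal (min z (z\<^sup>2)) \<partial>\<pi>) < \<infinity>"
begin

lemma AE_pos: "AE u in \<pi>. 0 < u"
  by (rule AE_I'[of "{..0}"]) (use nonpos_null sets_eq in \<open>auto simp: null_sets_def\<close>)

lemma measurable_from_borel: "g \<in> borel_measurable borel \<Longrightarrow> g \<in> borel_measurable \<pi>"
  using measurable_cong_sets[OF sets_eq refl] by blast

lemma integrable_min_square: "integrable \<pi> (\<lambda>u. min u (u\<^sup>2))"
proof (rule integrableI_bounded)
  show "(\<lambda>u. min u (u\<^sup>2)) \<in> borel_measurable \<pi>" by (rule measurable_from_borel) measurable
  have "(\<integral>\<^sup>+ u. ennreal (norm (min u (u\<^sup>2))) \<partial>\<pi>) = (\<integral>\<^sup>+ u. ennreal (min u (u\<^sup>2)) \<partial>\<pi>)"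
    by (rule nn_integral_cong_AE) (use AE_pos in \<open>eventually_elim, auto simp: min_def\<close>)
  then show "(\<integral>\<^sup>+ u. ennreal (norm (min u (u\<^sup>2))) \<partial>\<pi>) < \<infinity>" using moment by simp
qed

lemma psi_jump_measurable: "(\<lambda>u. psi_jump q u / c) \<in> borel_measurable \<pi>"
  by (rule measurable_from_borel) (unfold psi_jump_def, measurable)

lemma integrable_psi_jump:
  assumes "0 \<le> q"
  shows "integrable \<pi> (psi_jump q)"
proof (rule Bochner_Integration.integrable_bound)
  show "integrable \<pi> (\<lambda>u. q * max 1 q * min u (u\<^sup>2))"
    using integrable_min_square by (simp add: mult.assoc)
  show "psi_jump q \<in> borel_measurable \<pi>" using psi_jump_measurable[of q 1] by simp
  show "AE u in \<pi>. norm (psi_jump q u) \<le> norm (q * max 1 q * min u (u\<^sup>2))"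
    using AE_pos
  proof eventually_elim
    case (elim u)
    have "psi_jump q u \<le> q * min u (q * u\<^sup>2)"
      using psi_jump_increment_le[of 0 q u] assms elim by simp
    also have "\<dots> \<le> q * (max 1 q * min u (u\<^sup>2))"
      using min_mult_square_le[of u q] assms elim by (intro mult_left_mono) auto
    finally show ?case
      using psi_jump_nonneg[of q u] by (simp add: mult.assoc)
  qed
qed

lemma Psi_eq: "Psi b \<sigma> \<pi> q = b * q + 1/2 * \<sigma>\<^sup>2 * q\<^sup>2 + (\<integral>u. psi_jump q u \<partial>\<pi>)"
  by (simp add: Psi_def psi_jump_def)

lemma Psi_ge_linear: "b * q \<le> Psi b \<sigma> \<pi> q"
proof -
  have "0 \<le> (\<integral>u. psi_jump q u \<partial>\<pi>)"
    by (simp add: psi_jump_nonneg)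
  then show ?thesis unfolding Psi_eq by simp
qed

lemma integral_psi_jump_increment_bounds:
  assumes "0 \<le> y" "y \<le> x" "x \<le> M"
  shows "0 \<le> (\<integral>u. psi_jump x u - psi_jump y u \<partial>\<pi>)"
    and "(\<integral>u. psi_jump x u - psi_jump y u \<partial>\<pi>) \<le> max 1 M * (\<integral>u. min u (u\<^sup>2) \<partial>\<pi>) * (x - y)"
proof -
  show "0 \<le> (\<integral>u. psi_jump x u - psi_jump y u \<partial>\<pi>)"
    by (rule integral_nonneg_AE)
      (use AE_pos in \<open>eventually_elim, use assms in \<open>auto intro: psi_jump_mono\<close>\<close>)
  have "(\<integral>u. psi_jump x u - psi_jump y u \<partial>\<pi>) \<le> (\<integral>u. (x - y) * max 1 M * min u (u\<^sup>2) \<partial>\<pi>)"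
  proof (rule integral_mono_AE)
    show "integrable \<pi> (\<lambda>u. psi_jump x u - psi_jump y u)"
      using assms by (intro Bochner_Integration.integrable_diff integrable_psi_jump) auto
    show "integrable \<pi> (\<lambda>u. (x - y) * max 1 M * min u (u\<^sup>2))"
      using integrable_min_square by simp
    show "AE u in \<pi>. psi_jump x u - psi_jump y u \<le> (x - y) * max 1 M * min u (u\<^sup>2)"
      using AE_pos
    proof eventually_elim
      case (elim u)
      have "min u (x * u\<^sup>2) \<le> min u (M * u\<^sup>2)" using assms by (intro min.mono mult_right_mono) auto
      also have "\<dots> \<le> max 1 M * min u (u\<^sup>2)" using elim by (intro min_mult_square_le) auto
      finally have "(x - y) * min u (x * u\<^sup>2) \<le> (x - y) * (max 1 M * min u (u\<^sup>2))"
        using assms by (intro mult_left_mono) auto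
      then show ?case using psi_jump_increment_le[of y x u] assms elim by (simp add: mult.assoc)
    qed
  qed
  then show "(\<integral>u. psi_jump x u - psi_jump y u \<partial>\<pi>) \<le> max 1 M * (\<integral>u. min u (u\<^sup>2) \<partial>\<pi>) * (x - y)"
    by (simp add: mult.commute mult.left_commute)
qed

lemma Psi_increment_le:
  assumes "0 \<le> y" "y \<le> x" "x \<le> M"
  shows "\<bar>Psi b \<sigma> \<pi> x - Psi b \<sigma> \<pi> y\<bar>
    \<le> (\<bar>b\<bar> + \<sigma>\<^sup>2 * M + max 1 M * (\<integral>u. min u (u\<^sup>2) \<partial>\<pi>)) * (x - y)"
proof -
  define J where "J = (\<integral>u. psi_jump x u - psi_jump y u \<partial>\<pi>)"
  define S where "S = 1/2 * \<sigma>\<^sup>2 * (x\<^sup>2 - y\<^sup>2)"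
  have eq: "Psi b \<sigma> \<pi> x - Psi b \<sigma> \<pi> y = b * (x - y) + S + J"
    using Bochner_Integration.integral_diff[OF integrable_psi_jump integrable_psi_jump, of x y] assms
    by (simp add: Psi_eq J_def S_def algebra_simps)
  have "0 \<le> S" using assms by (simp add: S_def power_mono)
  have "x\<^sup>2 - y\<^sup>2 = (x + y) * (x - y)" by (simp add: power2_eq_square algebra_simps)
  also have "\<dots> \<le> (2 * M) * (x - y)" using assms by (intro mult_right_mono) auto
  finally have "\<sigma>\<^sup>2 * (x\<^sup>2 - y\<^sup>2) \<le> \<sigma>\<^sup>2 * (2 * M * (x - y))" by (intro mult_left_mono) auto
  then have "S \<le> \<sigma>\<^sup>2 * M * (x - y)" by (simp add: S_def)
  moreover have "b * (x - y) \<le> \<bar>b\<bar> * (x - y)"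
    by (rule mult_right_mono[OF abs_ge_self]) (use assms in simp)
  moreover have "- b * (x - y) \<le> \<bar>b\<bar> * (x - y)"
    by (rule mult_right_mono[OF abs_ge_minus_self]) (use assms in simp)
  ultimately show ?thesis
    unfolding eq using \<open>0 \<le> S\<close> integral_psi_jump_increment_bounds[OF assms, folded J_def]
    by (simp only: abs_le_iff distrib_right) linarith
qed

lemma Psi_lipschitz_on:
  assumes "0 \<le> M"
  shows "(\<bar>b\<bar> + \<sigma>\<^sup>2 * M + max 1 M * (\<integral>u. min u (u\<^sup>2) \<partial>\<pi>))-lipschitz_on {0..M} (Psi b \<sigma> \<pi>)"
proof (rule lipschitz_onI)
  have "0 \<le> (\<integral>u. min u (u\<^sup>2) \<partial>\<pi>)"
    by (rule integral_nonneg_AE) (use AE_pos in \<open>eventually_elim, simp\<close>)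
  then show "0 \<le> \<bar>b\<bar> + \<sigma>\<^sup>2 * M + max 1 M * (\<integral>u. min u (u\<^sup>2) \<partial>\<pi>)"
    using assms by simp
  fix x y assume "x \<in> {0..M}" "y \<in> {0..M}"
  then show "dist (Psi b \<sigma> \<pi> x) (Psi b \<sigma> \<pi> y)
      \<le> (\<bar>b\<bar> + \<sigma>\<^sup>2 * M + max 1 M * (\<integral>u. min u (u\<^sup>2) \<partial>\<pi>)) * dist x y"
    using Psi_increment_le[of y x M] Psi_increment_le[of x y M]
    by (cases "y \<le> x") (auto simp: dist_real_def abs_minus_commute)
qed

lemma Psi_scale_le:
  assumes "0 \<le> \<theta>" "\<theta> \<le> 1" "0 \<le> x"
  shows "Psi b \<sigma> \<pi> (\<theta> * x) \<le> \<theta> * Psi b \<sigma> \<pi> x"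
proof -
  have "(\<integral>u. psi_jump (\<theta> * x) u \<partial>\<pi>) \<le> (\<integral>u. \<theta> * psi_jump x u \<partial>\<pi>)"
    using assms
    by (intro integral_mono integrable_psi_jump integrable_mult_right psi_jump_scale_le) auto
  moreover have "\<sigma>\<^sup>2 * x\<^sup>2 * \<theta>\<^sup>2 \<le> \<sigma>\<^sup>2 * x\<^sup>2 * \<theta>"
    using assms by (intro mult_left_mono) (auto simp: power2_eq_square mult_left_le)
  ultimately show ?thesis by (simp add: Psi_eq power_mult_distrib algebra_simps)
qed

lemma Psi_slope_mono:
  assumes "0 < y" "y \<le> x"
  shows "Psi b \<sigma> \<pi> y / y \<le> Psi b \<sigma> \<pi> x / x"
proof -
  have "Psi b \<sigma> \<pi> ((y / x) * x) \<le> (y / x) * Psi b \<sigma> \<pi> x"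
    using assms by (intro Psi_scale_le) auto
  then show ?thesis using assms by (simp add: field_simps)
qed

lemma integral_psi_jump_slope_tendsto:
  "((\<lambda>q. (\<integral>u. psi_jump q u \<partial>\<pi>) / q) \<longlongrightarrow> 0) (at_right 0)"
proof -
  define s where "s t u = psi_jump (inverse t) u / inverse t" for t u
  have "((\<lambda>t. \<integral>u. s t u \<partial>\<pi>) \<longlongrightarrow> (\<integral>u. 0 \<partial>\<pi>)) at_top"
  proof (rule integral_dominated_convergence_at_top[where w = "\<lambda>u. min u (u\<^sup>2)"])
    show "s t \<in> borel_measurable \<pi>" for t
      unfolding s_def by (rule psi_jump_measurable)
    show "AE u in \<pi>. ((\<lambda>t. s t u) \<longlongrightarrow> 0) at_top"
      using AE_pos
    proof eventually_elim
      case (elim u)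
      show ?case
      proof (rule tendsto_sandwich[of "\<lambda>t. 0" _ _ "\<lambda>t. u\<^sup>2 / t"])
        show "\<forall>\<^sub>F t in at_top. 0 \<le> s t u"
          using eventually_ge_at_top[of 0] by eventually_elim (simp add: s_def psi_jump_nonneg)
        show "\<forall>\<^sub>F t in at_top. s t u \<le> u\<^sup>2 / t"
          using eventually_gt_at_top[of 0]
        proof eventually_elim
          case (elim t)
          have "s t u \<le> min u (inverse t * u\<^sup>2)"
            using psi_jump_slope_le[of "inverse t" u] \<open>0 < u\<close> elim by (simp add: s_def)
          also have "\<dots> \<le> inverse t * u\<^sup>2" by simp
          finally show ?case by (simp add: divide_inverse mult.commute)
        qed
      qed (auto intro!: tendsto_divide_0 filterlim_at_top_imp_at_infinity filterlim_ident)
    qed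
    show "\<forall>\<^sub>F t in at_top. AE u in \<pi>. norm (s t u) \<le> min u (u\<^sup>2)"
      using eventually_ge_at_top[of 1]
    proof eventually_elim
      case (elim t)
      show ?case
        using AE_pos
      proof eventually_elim
        case (elim u)
        have "s t u \<le> min u (inverse t * u\<^sup>2)"
          using psi_jump_slope_le[of "inverse t" u] \<open>0 < u\<close> \<open>1 \<le> t\<close> by (simp add: s_def)
        also have "\<dots> \<le> min u (u\<^sup>2)"
          using \<open>1 \<le> t\<close> by (intro min.mono mult_left_le_one_le) (auto simp: inverse_le_1_iff)
        finally show ?case
          using psi_jump_nonneg[of "inverse t" u] \<open>1 \<le> t\<close> by (simp add: s_def)
      qed
    qed
  qed (use integrable_min_square in simp_all)
  then have "((\<lambda>t. (\<integral>u. psi_jump (inverse t) u \<partial>\<pi>) / inverse t) \<longlongrightarrow> 0) at_top"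
    by (simp add: s_def)
  then show ?thesis by (rule filterlim_at_right_to_top[THEN iffD2])
qed

lemma Psi_slope_tendsto: "((\<lambda>q. Psi b \<sigma> \<pi> q / q) \<longlongrightarrow> b) (at_right 0)"
proof -
  have "((\<lambda>q. b + 1/2 * \<sigma>\<^sup>2 * q + (\<integral>u. psi_jump q u \<partial>\<pi>) / q) \<longlongrightarrow> b + 1/2 * \<sigma>\<^sup>2 * 0 + 0) (at_right 0)"
    by (intro tendsto_intros integral_psi_jump_slope_tendsto) (simp add: tendsto_ident_at)
  moreover have "\<forall>\<^sub>F q in at_right 0. b + 1/2 * \<sigma>\<^sup>2 * q + (\<integral>u. psi_jump q u \<partial>\<pi>) / q = Psi b \<sigma> \<pi> q / q"
    using eventually_at_right_less[of 0]
    by eventually_elim (simp add: Psi_eq add_divide_distrib power2_eq_square)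
  ultimately show ?thesis by (simp add: Lim_transform_eventually)
qed

end

lemma Psi_neg_below_rho_crit:
  assumes "0 < z" "ereal z < rho_crit b \<sigma> \<pi>"
  shows "Psi b \<sigma> \<pi> z < 0"
proof (rule ccontr)
  define Z where "Z = {z. 0 < z \<and> 0 \<le> Psi b \<sigma> \<pi> z}"
  assume "\<not> Psi b \<sigma> \<pi> z < 0"
  then have "z \<in> Z" using assms by (simp add: Z_def)
  then have "rho_crit b \<sigma> \<pi> = ereal (Inf Z)" by (auto simp: rho_crit_def Z_def)
  also have "Inf Z \<le> z" using \<open>z \<in> Z\<close> by (intro cInf_lower bdd_belowI[of _ 0]) (auto simp: Z_def)
  finally show False using assms by simp
qed

section \<open>The inverse flow\<close>

locale supercritical_flow = levy_measure +
  fixes b \<sigma> :: real and v :: "real \<Rightarrow> real \<Rightarrow> real" and \<mu> lam0 :: real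
  assumes b_neg: "b < 0"
    and flow: "\<And>l. 0 \<le> l \<Longrightarrow> ode_solution (Psi b \<sigma> \<pi>) (\<lambda>s. v s l)"
    and flow_init: "\<And>l. 0 \<le> l \<Longrightarrow> v 0 l = l"
    and Psi_neg: "\<And>z. 0 < z \<Longrightarrow> z \<le> \<mu> \<Longrightarrow> Psi b \<sigma> \<pi> z < 0"
    and lam0_pos: "0 < lam0"
    and lam0_less: "lam0 < \<mu>"
begin

abbreviation \<Psi> :: "real \<Rightarrow> real" where "\<Psi> \<equiv> Psi b \<sigma> \<pi>"

lemma flow_ge_persists:
  assumes "0 \<le> l" "0 \<le> s" "s \<le> t" "0 < c" "c \<le> \<mu>" "c \<le> v s l"
  shows "c \<le> v t l"
proof (rule ode_solution_stays_above[OF flow[OF \<open>0 \<le> l\<close>]])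
  show "\<Psi> z < 0" if "0 < z" "z < c" for z
    using Psi_neg[of z] that \<open>c \<le> \<mu>\<close> by simp
qed (use assms in auto)

lemma flow_le_before:
  assumes "0 \<le> l" "0 \<le> s" "s \<le> t" "0 < y" "y < \<mu>" "v t l \<le> y"
  shows "v s l \<le> y"
proof (rule ccontr)
  assume "\<not> v s l \<le> y"
  have "min (v s l) \<mu> \<le> v t l"
    by (rule flow_ge_persists) (use assms \<open>\<not> v s l \<le> y\<close> in auto)
  then show False using assms \<open>\<not> v s l \<le> y\<close> by simp
qed

lemma init_le_flow: "0 < l \<Longrightarrow> l \<le> \<mu> \<Longrightarrow> 0 \<le> t \<Longrightarrow> l \<le> v t l"
  using flow_ge_persists[of l 0 t l] flow_init by simp

lemma flow_pos_before: "0 \<le> l \<Longrightarrow> 0 \<le> s \<Longrightarrow> s \<le> t \<Longrightarrow> 0 < v t l \<Longrightarrow> 0 < v s l"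
  by (rule ode_solution_positive_backward[OF flow Psi_ge_linear])

lemma flow_le_exp:
  assumes "0 \<le> l" "0 \<le> t" "0 < v t l"
  shows "v t l \<le> l * exp (- b * t)"
proof -
  have pos: "0 < v s l" if "0 \<le> s" "s \<le> t" for s
    using flow_pos_before[OF \<open>0 \<le> l\<close> that \<open>0 < v t l\<close>] .
  have "ln (v t l) - ln (v 0 l) \<le> - b * (t - 0)"
  proof (rule ode_solution_ln_increment_le[OF flow[OF \<open>0 \<le> l\<close>]])
    fix s assume "0 < s" "s < t"
    then show "- \<Psi> (v s l) / v s l \<le> - b"
      using Psi_ge_linear[of b "v s l" \<sigma>] pos[of s] by (simp add: divide_simps)
  qed (use \<open>0 \<le> t\<close> pos in auto)
  moreover have "0 < l" using pos[of 0] flow_init assms by simp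
  ultimately have "ln (v t l) \<le> ln l - b * t" using flow_init assms by simp
  have "v t l = exp (ln (v t l))" using assms by simp
  also have "\<dots> \<le> exp (ln l - b * t)" using \<open>ln (v t l) \<le> ln l - b * t\<close> by simp
  also have "\<dots> = l * exp (- b * t)" using \<open>0 < l\<close> by (simp add: exp_diff exp_minus divide_inverse)
  finally show ?thesis .
qed

lemma ln_flow_increment_ge:
  assumes "0 \<le> l" "0 \<le> s" "s \<le> t" "0 < y" "y \<le> \<mu>"
    and between: "\<And>r. s \<le> r \<Longrightarrow> r \<le> t \<Longrightarrow> 0 < v r l \<and> v r l \<le> y"
  shows "- \<Psi> y / y * (t - s) \<le> ln (v t l) - ln (v s l)"
proof (rule ode_solution_ln_increment_ge[OF flow[OF \<open>0 \<le> l\<close>]])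
  fix r assume "s < r" "r < t"
  then show "- \<Psi> y / y \<le> - \<Psi> (v r l) / v r l"
    using Psi_slope_mono[of "v r l" y b \<sigma>] between[of r] by simp
qed (use assms in auto)

lemma preimage_bounds:
  assumes "0 \<le> l" "0 \<le> t" "v t l = lam0"
  shows "lam0 * exp (b * t) \<le> l" and "l \<le> lam0"
proof -
  show "l \<le> lam0"
    using flow_le_before[of l 0 t lam0] assms lam0_pos lam0_less flow_init by simp
  have "lam0 \<le> l * exp (- b * t)" using flow_le_exp[of l t] assms lam0_pos by simp
  then show "lam0 * exp (b * t) \<le> l" by (simp add: exp_minus field_simps)
qed

lemma flow_bi_lipschitz:
  assumes "0 \<le> t" "0 < a"
  obtains L where
    "\<And>l1 l2. l1 \<in> {a..lam0} \<Longrightarrow> l2 \<in> {a..lam0} \<Longrightarrow> \<bar>v t l1 - v t l2\<bar> \<le> exp (L * t) * \<bar>l1 - l2\<bar>"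
    "\<And>l1 l2. l1 \<in> {a..lam0} \<Longrightarrow> l2 \<in> {a..lam0} \<Longrightarrow> \<bar>l1 - l2\<bar> \<le> exp (L * t) * \<bar>v t l1 - v t l2\<bar>"
proof -
  define M where "M = lam0 * exp (- b * t)"
  obtain L where L: "L-lipschitz_on {0..M} \<Psi>"
    using Psi_lipschitz_on[of M] lam0_pos by (auto simp: M_def)
  have range: "v s l \<in> {0..M}" if "l \<in> {a..lam0}" "0 \<le> s" "s \<le> t" for l s
  proof -
    have "0 < l" "l \<le> v s l" using that assms lam0_less by (auto intro: init_le_flow)
    then have "v s l \<le> l * exp (- b * s)" using that by (intro flow_le_exp) auto
    also have "\<dots> \<le> M" unfolding M_def using that b_neg \<open>0 < l\<close> by (intro mult_mono) auto
    finally show ?thesis using \<open>0 < l\<close> \<open>l \<le> v s l\<close> by simp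
  qed
  have lip: "\<bar>\<Psi> (v s l1) - \<Psi> (v s l2)\<bar> \<le> L * \<bar>v s l1 - v s l2\<bar>"
    if "l1 \<in> {a..lam0}" "l2 \<in> {a..lam0}" "0 \<le> s" "s \<le> t" for l1 l2 s
    using lipschitz_onD[OF L range range] that by (simp add: dist_real_def)
  show thesis
  proof (rule that)
    fix l1 l2 assume l: "l1 \<in> {a..lam0}" "l2 \<in> {a..lam0}"
    then have "0 \<le> l1" "0 \<le> l2" using assms by auto
    note gronwall = ode_solutions_gronwall[OF flow[OF \<open>0 \<le> l1\<close>] flow[OF \<open>0 \<le> l2\<close>] \<open>0 \<le> t\<close> lip[OF l]]
    show "\<bar>v t l1 - v t l2\<bar> \<le> exp (L * t) * \<bar>l1 - l2\<bar>"
      using gronwall(1) flow_init \<open>0 \<le> l1\<close> \<open>0 \<le> l2\<close> by simp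
    show "\<bar>l1 - l2\<bar> \<le> exp (L * t) * \<bar>v t l1 - v t l2\<bar>"
      using gronwall(2) flow_init \<open>0 \<le> l1\<close> \<open>0 \<le> l2\<close> by simp
  qed
qed

lemma ex1_preimage:
  assumes "0 \<le> t"
  shows "\<exists>!l. 0 \<le> l \<and> v t l = lam0"
proof -
  define a where "a = lam0 * exp (b * t) / 2"
  have "0 < a" using lam0_pos by (simp add: a_def)
  have "exp (b * t) \<le> 1" using b_neg assms by (simp add: mult_nonpos_nonneg)
  then have "lam0 * exp (b * t) \<le> lam0" using lam0_pos by (intro mult_left_le) auto
  then have "a \<le> lam0" using lam0_pos unfolding a_def by linarith
  obtain L where L1: "\<And>l1 l2. l1 \<in> {a..lam0} \<Longrightarrow> l2 \<in> {a..lam0} \<Longrightarrow> \<bar>v t l1 - v t l2\<bar> \<le> exp (L * t) * \<bar>l1 - l2\<bar>"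
    and L2: "\<And>l1 l2. l1 \<in> {a..lam0} \<Longrightarrow> l2 \<in> {a..lam0} \<Longrightarrow> \<bar>l1 - l2\<bar> \<le> exp (L * t) * \<bar>v t l1 - v t l2\<bar>"
    using flow_bi_lipschitz[OF assms \<open>0 < a\<close>] by blast
  have "continuous_on {a..lam0} (\<lambda>l. v t l)"
    by (rule lipschitz_on_continuous_on[of "exp (L * t)"], rule lipschitz_onI)
      (use L1 in \<open>auto simp: dist_real_def\<close>)
  moreover have "a \<le> v t a" using \<open>0 < a\<close> \<open>a \<le> lam0\<close> lam0_less assms by (intro init_le_flow) auto
  then have "v t a \<le> a * exp (- b * t)" using \<open>0 < a\<close> assms by (intro flow_le_exp) auto
  then have "v t a \<le> lam0" using lam0_pos by (simp add: a_def mult.assoc flip: exp_add)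
  moreover have "lam0 \<le> v t lam0" using lam0_pos lam0_less assms by (intro init_le_flow) auto
  ultimately obtain l where l: "a \<le> l" "l \<le> lam0" "v t l = lam0"
    using IVT'[of "\<lambda>l. v t l" a lam0 lam0] \<open>a \<le> lam0\<close> by auto
  have "l' = l" if "0 \<le> l'" "v t l' = lam0" for l'
  proof -
    have "a \<le> l'" "l' \<le> lam0"
      using preimage_bounds[OF that(1) assms that(2)] \<open>0 < a\<close> by (auto simp: a_def)
    then show ?thesis using L2[of l' l] l that by simp
  qed
  then show ?thesis using l \<open>0 < a\<close> by (intro ex1I[of _ l]) auto
qed

lemma v_inv_preimage:
  assumes "0 \<le> t"
  shows "0 \<le> v_inv v t lam0" and "v t (v_inv v t lam0) = lam0"
  using theI'[OF ex1_preimage[OF assms]] by (simp_all add: v_inv_def)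

lemma ln_v_inv_lower:
  assumes "0 \<le> t"
  shows "ln lam0 + b * t \<le> ln (v_inv v t lam0)"
proof -
  have "lam0 * exp (b * t) \<le> v_inv v t lam0"
    using preimage_bounds(1)[OF v_inv_preimage(1)[OF assms] assms v_inv_preimage(2)[OF assms]] .
  then have "ln (lam0 * exp (b * t)) \<le> ln (v_inv v t lam0)" using lam0_pos by (intro ln_mono) auto
  then show ?thesis using lam0_pos by (simp add: ln_mult)
qed

lemma flow_log_growth_below_level:
  assumes "0 < r" "r \<le> lam0" "0 \<le> t" "v t r = lam0" "0 < \<delta>" "\<delta> \<le> lam0"
  obtains \<tau> where "0 \<le> \<tau>" "\<tau> \<le> t" "\<delta> \<le> v \<tau> r" "- \<Psi> \<delta> / \<delta> * \<tau> \<le> ln (v \<tau> r) - ln r"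
proof (cases "\<delta> \<le> r")
  case True
  then show ?thesis using that[of 0] flow_init assms by simp
next
  case False
  have "continuous_on {0..t} (\<lambda>s. v s r)"
    by (rule ode_solution_continuous_on[OF flow]) (use assms in auto)
  then obtain \<tau> where \<tau>: "0 \<le> \<tau>" "\<tau> \<le> t" "v \<tau> r = \<delta>"
    using IVT'[of "\<lambda>s. v s r" 0 \<delta> t] False flow_init assms by auto
  have "- \<Psi> \<delta> / \<delta> * (\<tau> - 0) \<le> ln (v \<tau> r) - ln (v 0 r)"
  proof (rule ln_flow_increment_ge)
    fix s assume "0 \<le> s" "s \<le> \<tau>"
    then have "r \<le> v s r" using assms lam0_less by (intro init_le_flow) auto
    moreover have "v s r \<le> \<delta>"
      by (rule flow_le_before[of r s \<tau>]) (use assms \<tau> lam0_less \<open>s \<le> \<tau>\<close> \<open>0 \<le> s\<close> in auto)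
    ultimately show "0 < v s r \<and> v s r \<le> \<delta>" using \<open>0 < r\<close> by simp
  qed (use assms \<tau> lam0_less in auto)
  then show ?thesis using that[of \<tau>] \<tau> flow_init assms by simp
qed

lemma ln_v_inv_le_slope:
  assumes "0 < \<delta>" "\<delta> < lam0"
  shows "\<exists>K. \<forall>t\<ge>0. ln (v_inv v t lam0) \<le> K + \<Psi> \<delta> / \<delta> * t"
proof -
  define c where "c = - \<Psi> \<delta> / \<delta>"
  define c1 where "c1 = - \<Psi> lam0 / lam0"
  have "0 < c" using Psi_neg[of \<delta>] assms lam0_less by (simp add: c_def divide_neg_pos)
  have "0 < c1" using Psi_neg[of lam0] lam0_pos lam0_less by (simp add: c1_def divide_neg_pos)
  define T where "T = (ln lam0 - ln \<delta>) / c1"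
  show ?thesis
  proof (intro exI allI impI)
    fix t :: real assume "0 \<le> t"
    define r where "r = v_inv v t lam0"
    have "0 \<le> r" "v t r = lam0" using v_inv_preimage[OF \<open>0 \<le> t\<close>] by (simp_all add: r_def)
    then have "0 < r" "r \<le> lam0"
      using preimage_bounds[of r t] \<open>0 \<le> t\<close> lam0_pos
      by (auto intro: less_le_trans[of 0 "lam0 * exp (b * t)"])
    have below: "0 < v s r \<and> v s r \<le> lam0" if "0 \<le> s" "s \<le> t" for s
      using init_le_flow[of r s] flow_le_before[of r s t lam0] that \<open>0 < r\<close> \<open>r \<le> lam0\<close>
        \<open>v t r = lam0\<close> lam0_pos lam0_less by auto
    obtain \<tau> where \<tau>: "0 \<le> \<tau>" "\<tau> \<le> t" "\<delta> \<le> v \<tau> r" "c * \<tau> \<le> ln (v \<tau> r) - ln r"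
      using flow_log_growth_below_level[OF \<open>0 < r\<close> \<open>r \<le> lam0\<close> \<open>0 \<le> t\<close> \<open>v t r = lam0\<close> assms(1)]
        assms(2) unfolding c_def by auto
    have "c1 * (t - \<tau>) \<le> ln (v t r) - ln (v \<tau> r)"
      unfolding c1_def using \<tau> below lam0_pos lam0_less \<open>0 < r\<close> by (intro ln_flow_increment_ge) auto
    also have "\<dots> \<le> ln lam0 - ln \<delta>" using \<tau> assms \<open>v t r = lam0\<close> by simp
    finally have "t - \<tau> \<le> T" using \<open>0 < c1\<close> by (simp add: T_def field_simps)
    have "ln r \<le> ln (v \<tau> r) - c * \<tau>" using \<tau> by simp
    also have "\<dots> \<le> ln lam0 - c * \<tau>" using below[of \<tau>] \<tau> by simp
    also have "\<dots> \<le> ln lam0 + c * T - c * t"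
      using mult_left_mono[OF \<open>t - \<tau> \<le> T\<close>, of c] \<open>0 < c\<close> by (simp add: algebra_simps)
    finally show "ln (v_inv v t lam0) \<le> (ln lam0 + c * T) + \<Psi> \<delta> / \<delta> * t"
      by (simp add: r_def c_def)
  qed
qed

lemma ln_v_inv_upper:
  assumes "0 < \<epsilon>"
  shows "\<exists>K. \<forall>t\<ge>0. ln (v_inv v t lam0) \<le> K + (b + \<epsilon>) * t"
proof -
  have "\<forall>\<^sub>F q in at_right 0. \<Psi> q / q < b + \<epsilon>"
    using order_tendstoD(2)[OF Psi_slope_tendsto] assms by simp
  moreover have "\<forall>\<^sub>F q in at_right 0. 0 < q \<and> q < lam0"
    using lam0_pos by (auto simp: eventually_at_right_field)
  ultimately have "\<forall>\<^sub>F q in at_right 0. \<Psi> q / q < b + \<epsilon> \<and> 0 < q \<and> q < lam0"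
    by eventually_elim auto
  then obtain \<delta> where \<delta>: "\<Psi> \<delta> / \<delta> < b + \<epsilon>" "0 < \<delta>" "\<delta> < lam0"
    using eventually_happens'[OF trivial_limit_at_right_real] by blast
  then obtain K where K: "\<And>t. 0 \<le> t \<Longrightarrow> ln (v_inv v t lam0) \<le> K + \<Psi> \<delta> / \<delta> * t"
    using ln_v_inv_le_slope by blast
  have "ln (v_inv v t lam0) \<le> K + (b + \<epsilon>) * t" if "0 \<le> t" for t
    using K[OF that] mult_right_mono[OF less_imp_le[OF \<delta>(1)] that] by linarith
  then show ?thesis by blast
qed

end


theorem lemma3:
  fixes \<sigma> b lam0 :: real and \<pi> :: "real measure" and v :: "real \<Rightarrow> real \<Rightarrow> real"
  assumes sigma_nonneg: "\<sigma> \<ge> 0"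
    and sets_pi: "sets \<pi> = sets borel"
    and sigma_finite: "sigma_finite_measure \<pi>"
    and pi_support: "emeasure \<pi> {..0} = 0"
    and pi_moment: "(\<integral>\<^sup>+ z. ennreal (min z (z\<^sup>2)) \<partial>\<pi>) < \<infinity>"
    and v_ode: "\<And>l t. l \<ge> 0 \<Longrightarrow> t \<ge> 0 \<Longrightarrow>
         ((\<lambda>s. v s l) has_real_derivative (- Psi b \<sigma> \<pi> (v t l))) (at t within {0..})"
    and v_init: "\<And>l. l \<ge> 0 \<Longrightarrow> v 0 l = l"
    and lam0_pos: "lam0 > 0" "ereal lam0 < rho_crit b \<sigma> \<pi>"
    and b_neg: "b < 0"
  shows "(\<lambda>t. ln (v_inv v t lam0)) \<sim>[at_top] (\<lambda>t. b * t)"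
proof -
  obtain \<mu> where "lam0 < \<mu>" "ereal \<mu> < rho_crit b \<sigma> \<pi>"
    using ereal_dense2[OF lam0_pos(2)] by auto
  interpret supercritical_flow \<pi> b \<sigma> v \<mu> lam0
  proof unfold_locales
    show "Psi b \<sigma> \<pi> z < 0" if "0 < z" "z \<le> \<mu>" for z
      using Psi_neg_below_rho_crit[of z b \<sigma> \<pi>] that \<open>ereal \<mu> < rho_crit b \<sigma> \<pi>\<close>
      by (metis ereal_less_eq(3) order.strict_trans1)
  qed (use assms \<open>lam0 < \<mu>\<close> in \<open>auto simp: ode_solution_def\<close>)
  show ?thesis
    using asymp_equiv_linear_sandwich[OF _ ln_v_inv_lower ln_v_inv_upper] b_neg by simp
qed

end
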